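(* Let $Y\ge0$ be a random variable with $1<\mathbb{E}Y\le\infty$. (i) There is a unique $\rho>0$ such that $\rho=1-\mathbb{E}e^{-\rho Y}$. (ii) If $\mathbb{E}Y^2<\infty$, then $\rho>\dfrac{2(\mathbb{E}Y-1)}{\mathbb{E}Y^2}$. (iii) If $\mathbb{E}Y^3<\infty$ and $8(\mathbb{E}Y-1)\mathbb{E}Y^3\le 3(\mathbb{E}Y^2)^2$, then $$\rho<\frac{3\mathbb{E}Y^2-\sqrt{9(\mathbb{E}Y^2)^2-24(\mathbb{E}Y-1)\mathbb{E}Y^3}}{2\mathbb{E}Y^3}=\frac{4(\mathbb{E}Y-1)}{\mathbb{E}Y^2+\sqrt{(\mathbb{E}Y^2)^2-\frac83(\mathbb{E}Y-1)\mathbb{E}Y^3}}\le\frac{2(\mathbb{E}Y-1)}{\mathbb{E}Y^2}\Bigl(1+\frac{8(\mathbb{E}Y-1)\mathbb{E}Y^3}{3(\mathbb{E}Y^2)^2}\Bigr).$$ (iv) Let $Y_n$, $n\ge1$, be random variables with $Y_n\ge0$ and $\mathbb{E}Y_n>1$, and let $\rho_n>0$ be the corresponding numbers with $\rho_n=1-\mathbb{E}e^{-\rho_nY_n}$. If $Y_n\to Y$ in distribution for some $Y$ with $\mathbb{E}Y>1$, then $\rho_n\to\rho>0$ where $\rho$ satisfies $\rho=1-\mathbb{E}e^{-\rho Y}$. If instead $Y_n\to Y$ in distribution with $\mathbb{E}Y\le1$, then $\rho_n\to0$. *)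

theory Defs
  imports "HOL-Probability.Probability"
begin

text \<open>A nonnegative real random variable Y is represented by its law mu
  (a Borel probability measure on the reals concentrated on [0,inf)).\<close>
definition nonneg_law :: "real measure \<Rightarrow> bool" where
  "nonneg_law \<mu> \<longleftrightarrow> real_distribution \<mu> \<and> (AE y in \<mu>. 0 \<le> y)"

definition moment :: "real measure \<Rightarrow> nat \<Rightarrow> ennreal" where
  "moment \<mu> k = (\<integral>\<^sup>+ y. ennreal (y ^ k) \<partial>\<mu>)"

definition solves_eq :: "real measure \<Rightarrow> real \<Rightarrow> bool" where
  "solves_eq \<mu> \<rho> \<longleftrightarrow> \<rho> = 1 - (\<integral> y. exp (- (\<rho> * y)) \<partial>\<mu>)"

end

theory Submission
  imports Defs
begin

text \<open>Put \<open>G(r) = E (1 - exp (-r Y)) / r\<close>, so that the equation says \<open>G(\<rho>) = 1\<close>. Since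
  \<open>(1 - exp (-x)) / x\<close> is strictly decreasing on \<open>(0, \<infinity>)\<close>, \<open>G\<close> is continuous and strictly
  decreasing; it tends to \<open>E Y > 1\<close> as \<open>r \<rightarrow> 0\<close> and is at most \<open>1 / r\<close>, which gives (i).
  Sandwiching \<open>exp (-x)\<close> between its Taylor polynomials of degree 2 and 3 bounds
  \<open>1 - E exp (-r Y)\<close> by polynomials in \<open>r\<close> with the moments as coefficients. At \<open>r = \<rho>\<close> the
  lower one gives (ii); at the smaller root of the upper one minus \<open>r\<close> we get \<open>G(r) < 1\<close>, hence
  (iii). For (iv), weak convergence gives \<open>G\<^sub>n(r) \<rightarrow> G(r)\<close> for each \<open>r > 0\<close> because the
  integrand is bounded and continuous, and monotonicity of the \<open>G\<^sub>n\<close> carries this over to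
  their roots.\<close>

lemma exp_minus_lt_taylor2:
  fixes x :: real
  assumes "0 < x"
  shows "exp (-x) < 1 - x + x^2 / 2"
proof -
  obtain t where "exp (-x) = (\<Sum>m<3. (-x) ^ m / fact m) + exp t / fact 3 * (-x) ^ 3"
    using Maclaurin_exp_lt[of "-x" 3] assms by auto
  moreover have "exp t / fact 3 * (-x) ^ 3 < 0"
    using assms by (simp add: mult_pos_neg)
  ultimately show ?thesis
    by (simp add: numeral_eq_Suc lessThan_Suc field_simps power2_eq_square)
qed

lemma exp_minus_gt_taylor3:
  fixes x :: real
  assumes "0 < x"
  shows "1 - x + x^2 / 2 - x^3 / 6 < exp (-x)"
proof -
  obtain t where "exp (-x) = (\<Sum>m<4. (-x) ^ m / fact m) + exp t / fact 4 * (-x) ^ 4"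
    using Maclaurin_exp_lt[of "-x" 4] assms by auto
  moreover have "0 < exp t / fact 4 * (-x) ^ 4"
    using assms by simp
  ultimately show ?thesis
    by (simp add: numeral_eq_Suc lessThan_Suc field_simps power2_eq_square)
qed

lemma one_minus_exp_minus_div_strict_decreasing:
  fixes a b :: real
  assumes "0 < a" "a < b"
  shows "(1 - exp (-b)) / b < (1 - exp (-a)) / a"
proof -
  have "\<exists>D. ((\<lambda>x. (1 - exp (-x)) / x) has_real_derivative D) (at x) \<and> D < 0"
    if "a \<le> x" for x
  proof -
    have x: "0 < x" using that assms by linarith
    have "1 + x < exp x"
      using exp_minus_greater[of "-x"] x by simp
    then have "exp (-x) * (1 + x) < 1"
      by (simp add: exp_minus field_simps)
    then have "(exp (-x) * x - (1 - exp (-x))) / (x * x) < 0"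
      using x by (simp add: divide_neg_pos algebra_simps)
    moreover have "((\<lambda>x. (1 - exp (-x)) / x) has_real_derivative
        (exp (-x) * x - (1 - exp (-x))) / (x * x)) (at x)"
      using x by (auto intro!: derivative_eq_intros)
    ultimately show ?thesis by blast
  qed
  then show ?thesis
    using DERIV_neg_imp_decreasing[OF assms(2), of "\<lambda>x. (1 - exp (-x)) / x"] by simp
qed

text \<open>The function \<open>G\<close> above is \<open>mean_exp_defect \<mu>\<close>. The positive part keeps \<open>exp_defect r\<close>
  bounded by \<open>1 / r\<close> for every law, so the lemmas on arbitrary real distributions need no
  sign hypothesis.\<close>
definition exp_defect :: "real \<Rightarrow> real \<Rightarrow> real" where
  "exp_defect r y = (1 - exp (-(r * max y 0))) / r"

definition laplace :: "real measure \<Rightarrow> real \<Rightarrow> real" where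
  "laplace \<mu> r = (\<integral>y. exp (-(r * max y 0)) \<partial>\<mu>)"

definition mean_exp_defect :: "real measure \<Rightarrow> real \<Rightarrow> real" where
  "mean_exp_defect \<mu> r = (\<integral>y. exp_defect r y \<partial>\<mu>)"

lemma borel_measurable_exp_defect [measurable]: "exp_defect r \<in> borel_measurable borel"
  unfolding exp_defect_def by measurable

lemma exp_defect_nonneg: "0 < r \<Longrightarrow> 0 \<le> exp_defect r y"
  unfolding exp_defect_def by (auto intro!: divide_nonneg_pos)

lemma exp_defect_le_inverse: "0 < r \<Longrightarrow> exp_defect r y \<le> 1 / r"
  unfolding exp_defect_def by (auto intro!: divide_right_mono)

lemma exp_defect_le_pos_part:
  assumes "0 < r"
  shows "exp_defect r y \<le> max y 0"
proof -
  have "1 - exp (-(r * max y 0)) \<le> r * max y 0"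
    using exp_minus_ge[of "r * max y 0"] by simp
  then show ?thesis
    using assms by (simp add: exp_defect_def divide_simps mult.commute)
qed

lemma exp_defect_ge:
  assumes "0 < r"
  shows "max y 0 - r * (max y 0)^2 / 2 \<le> exp_defect r y"
proof (cases "0 < y")
  case True
  then have "exp (-(r * y)) < 1 - r * y + (r * y)^2 / 2"
    using exp_minus_lt_taylor2[of "r * y"] assms by simp
  then show ?thesis
    using True assms by (simp add: exp_defect_def divide_simps power2_eq_square algebra_simps)
qed (simp add: exp_defect_def)

lemma exp_defect_strict_antimono:
  assumes "0 < r" "r < s" "0 < y"
  shows "exp_defect s y < exp_defect r y"
proof -
  have "(1 - exp (-(s * y))) / (s * y) < (1 - exp (-(r * y))) / (r * y)"
    using assms by (intro one_minus_exp_minus_div_strict_decreasing) auto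
  then have "y * ((1 - exp (-(s * y))) / (s * y)) < y * ((1 - exp (-(r * y))) / (r * y))"
    using assms by (intro mult_strict_left_mono) auto
  then show ?thesis
    using assms by (simp add: exp_defect_def)
qed

lemma exp_defect_antimono: "0 < r \<Longrightarrow> r \<le> s \<Longrightarrow> exp_defect s y \<le> exp_defect r y"
  using exp_defect_strict_antimono[of r s y]
  by (cases "0 < y"; cases "r = s") (auto simp: exp_defect_def)

lemma isCont_exp_defect: "isCont (exp_defect r) y"
proof (cases "r = 0")
  case True
  then have "exp_defect r = (\<lambda>_. 0)" by (simp add: exp_defect_def fun_eq_iff)
  then show ?thesis by simp
next
  case False
  then show ?thesis unfolding exp_defect_def by (intro continuous_intros)
qed

lemma exp_defect_tendsto_pos_part:
  assumes "r \<longlonglongrightarrow> 0" "\<And>n. 0 < r n"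
  shows "(\<lambda>n. exp_defect (r n) y) \<longlonglongrightarrow> max y 0"
proof (rule tendsto_sandwich)
  show "\<forall>\<^sub>F n in sequentially. max y 0 - r n * (max y 0)^2 / 2 \<le> exp_defect (r n) y"
    using assms(2) by (intro always_eventually allI exp_defect_ge)
  show "\<forall>\<^sub>F n in sequentially. exp_defect (r n) y \<le> max y 0"
    using assms(2) by (intro always_eventually allI exp_defect_le_pos_part)
  show "(\<lambda>n. max y 0 - r n * (max y 0)^2 / 2) \<longlonglongrightarrow> max y 0"
    using assms(1) by (auto intro!: tendsto_eq_intros)
qed simp

context real_distribution
begin

lemma integrable_exp_defect: "0 < r \<Longrightarrow> integrable M (exp_defect r)"
  by (rule integrable_const_bound[where B = "1 / r"])
     (auto simp: exp_defect_nonneg exp_defect_le_inverse)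

lemma integrable_exp_neg_pos_part: "0 \<le> r \<Longrightarrow> integrable M (\<lambda>y. exp (-(r * max y 0)))"
  by (rule integrable_const_bound[where B = 1]) auto

lemma mean_exp_defect_eq: "0 < r \<Longrightarrow> mean_exp_defect M r = (1 - laplace M r) / r"
  using integrable_exp_neg_pos_part[of r] prob_space
  by (simp add: mean_exp_defect_def exp_defect_def laplace_def)

lemma continuous_on_laplace: "continuous_on {0..} (laplace M)"
proof (rule continuous_on_sequentiallyI)
  fix u :: "nat \<Rightarrow> real" and a
  assume u: "\<forall>n. u n \<in> {0..}" "a \<in> {0..}" "u \<longlonglongrightarrow> a"
  show "(\<lambda>n. laplace M (u n)) \<longlonglongrightarrow> laplace M a"
    unfolding laplace_def
    by (rule integral_dominated_convergence[where w = "\<lambda>_. 1"])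
       (use u in \<open>auto intro!: AE_I2 tendsto_intros\<close>)
qed

lemma continuous_on_mean_exp_defect: "continuous_on {0<..} (mean_exp_defect M)"
proof -
  have "continuous_on {0<..} (\<lambda>r. (1 - laplace M r) / r)"
    by (intro continuous_intros continuous_on_subset[OF continuous_on_laplace]) auto
  then show ?thesis
    by (rule continuous_on_cong[THEN iffD1, rotated 2]) (auto simp: mean_exp_defect_eq)
qed

lemma mean_exp_defect_antimono:
  "0 < r \<Longrightarrow> r \<le> s \<Longrightarrow> mean_exp_defect M s \<le> mean_exp_defect M r"
  unfolding mean_exp_defect_def
  by (intro integral_mono integrable_exp_defect exp_defect_antimono) auto

lemma mean_exp_defect_strict_antimono:
  assumes "emeasure M {0<..} \<noteq> 0" "0 < r" "r < s"
  shows "mean_exp_defect M s < mean_exp_defect M r"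
  unfolding mean_exp_defect_def
proof (rule integral_less_AE[where A = "{0<..}"])
  show "AE y in M. y \<in> {0<..} \<longrightarrow> exp_defect s y \<noteq> exp_defect r y"
    using exp_defect_strict_antimono[of r s] assms by (auto intro!: AE_I2 dest: less_imp_neq)
  show "AE y in M. exp_defect s y \<le> exp_defect r y"
    using exp_defect_antimono[of r s] assms by (auto intro!: AE_I2)
qed (use assms integrable_exp_defect in auto)

lemma mean_exp_defect_le_inverse: "0 < r \<Longrightarrow> mean_exp_defect M r \<le> 1 / r"
  using integral_mono[OF integrable_exp_defect, of r "\<lambda>_. 1 / r"] prob_space
  by (simp add: mean_exp_defect_def exp_defect_le_inverse)

lemma mean_exp_defect_null:
  assumes "emeasure M {0<..} = 0"
  shows "mean_exp_defect M r = 0"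
proof -
  have "AE y in M. y \<notin> {0<..}"
    using assms by (intro AE_I[where N = "{0<..}"]) auto
  then have "AE y in M. exp_defect r y = 0"
    by eventually_elim (simp add: exp_defect_def)
  then show ?thesis
    unfolding mean_exp_defect_def by (subst integral_cong_AE[where g = "\<lambda>_. 0"]) auto
qed

lemma nn_integral_exp_defect:
  "0 < r \<Longrightarrow> (\<integral>\<^sup>+y. ennreal (exp_defect r y) \<partial>M) = ennreal (mean_exp_defect M r)"
  unfolding mean_exp_defect_def
  by (intro nn_integral_eq_integral integrable_exp_defect AE_I2 exp_defect_nonneg)

text \<open>\<open>ennreal\<close> maps negative reals to 0, so \<open>\<integral>\<^sup>+y. ennreal y \<partial>M\<close> is the mean of \<open>Y\<^sup>+\<close>.\<close>
lemma mean_exp_defect_le_pos_mean: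
  assumes "0 < r"
  shows "ennreal (mean_exp_defect M r) \<le> (\<integral>\<^sup>+y. ennreal y \<partial>M)"
proof -
  have "ennreal (exp_defect r y) \<le> ennreal y" for y
    using exp_defect_le_pos_part[OF assms, of y] exp_defect_nonneg[OF assms, of y]
    by (cases "0 \<le> y") (auto intro: ennreal_leI)
  then show ?thesis
    using assms by (auto simp flip: nn_integral_exp_defect intro!: nn_integral_mono)
qed

lemma mean_exp_defect_exceeds:
  assumes "c < (\<integral>\<^sup>+y. ennreal y \<partial>M)"
  shows "\<exists>r>0. c < ennreal (mean_exp_defect M r)"
proof -
  define f where "f n y = ennreal (exp_defect (1 / Suc n) y)" for n y
  have [measurable]: "f n \<in> borel_measurable M" for n
    unfolding f_def by measurable
  have inc: "incseq f"
    unfolding f_def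
    by (intro incseq_SucI le_funI ennreal_leI exp_defect_antimono) (auto simp: field_simps)
  have "(\<lambda>n. 1 / real (Suc n)) \<longlonglongrightarrow> 0"
    using LIMSEQ_inverse_real_of_nat by (simp add: inverse_eq_divide)
  then have "(\<lambda>n. f n y) \<longlonglongrightarrow> ennreal (max y 0)" for y
    unfolding f_def by (intro tendsto_ennrealI exp_defect_tendsto_pos_part) auto
  moreover have "(\<lambda>n. f n y) \<longlonglongrightarrow> (SUP n. f n y)" for y
    using inc by (intro LIMSEQ_SUP) (simp add: incseq_def le_fun_def)
  ultimately have "(SUP n. f n y) = ennreal y" for y
    using LIMSEQ_unique by fastforce
  then have "(\<integral>\<^sup>+y. ennreal y \<partial>M) = (\<integral>\<^sup>+y. (SUP n. f n y) \<partial>M)"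
    by simp
  also have "\<dots> = (SUP n. integral\<^sup>N M (f n))"
    by (rule nn_integral_monotone_convergence_SUP[OF inc]) simp
  finally obtain n where "c < integral\<^sup>N M (f n)"
    using assms by (auto simp: less_SUP_iff)
  moreover have "integral\<^sup>N M (f n) = ennreal (mean_exp_defect M (1 / Suc n))"
    unfolding f_def by (rule nn_integral_exp_defect) simp
  ultimately show ?thesis
    by (intro exI[of _ "1 / Suc n"]) auto
qed

lemma mean_exp_defect_weak_conv:
  assumes "\<And>n. real_distribution (\<nu> n)" "weak_conv_m \<nu> M" "0 < r"
  shows "(\<lambda>n. mean_exp_defect (\<nu> n) r) \<longlonglongrightarrow> mean_exp_defect M r"
  unfolding mean_exp_defect_def
  by (rule weak_conv_imp_integral_bdd_continuous_conv[where B = "1 / r"])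
     (use assms real_distribution_axioms in
       \<open>auto simp: isCont_exp_defect exp_defect_nonneg exp_defect_le_inverse\<close>)

lemma laplace_lt_taylor2:
  assumes "integrable M (\<lambda>y. max y 0)" "integrable M (\<lambda>y. (max y 0)^2)"
    and "emeasure M {0<..} \<noteq> 0" "0 < r"
  shows "laplace M r < 1 - r * (\<integral>y. max y 0 \<partial>M) + r^2 / 2 * (\<integral>y. (max y 0)^2 \<partial>M)"
proof -
  define T where "T y = 1 - r * max y 0 + r^2 / 2 * (max y 0)^2" for y
  have lt: "exp (-(r * max y 0)) < T y" if "0 < y" for y
    using exp_minus_lt_taylor2[of "r * y"] that assms(4) by (simp add: T_def power_mult_distrib)
  then have le: "exp (-(r * max y 0)) \<le> T y" for y
    by (cases "0 < y") (auto simp: T_def less_imp_le)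
  have "laplace M r < (\<integral>y. T y \<partial>M)"
    unfolding laplace_def
    by (rule integral_less_AE[where A = "{0<..}"])
       (use assms lt le integrable_exp_neg_pos_part[of r] in
         \<open>auto simp: T_def intro!: AE_I2 dest: less_imp_neq\<close>)
  also have "(\<integral>y. T y \<partial>M) = 1 - r * (\<integral>y. max y 0 \<partial>M) + r^2 / 2 * (\<integral>y. (max y 0)^2 \<partial>M)"
    using assms prob_space by (simp add: T_def)
  finally show ?thesis .
qed

lemma laplace_gt_taylor3:
  assumes "integrable M (\<lambda>y. max y 0)" "integrable M (\<lambda>y. (max y 0)^2)"
    and "integrable M (\<lambda>y. (max y 0)^3)" "emeasure M {0<..} \<noteq> 0" "0 < r"
  shows "1 - r * (\<integral>y. max y 0 \<partial>M) + r^2 / 2 * (\<integral>y. (max y 0)^2 \<partial>M)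
      - r^3 / 6 * (\<integral>y. (max y 0)^3 \<partial>M) < laplace M r"
proof -
  define T where "T y = 1 - r * max y 0 + r^2 / 2 * (max y 0)^2 - r^3 / 6 * (max y 0)^3" for y
  have lt: "T y < exp (-(r * max y 0))" if "0 < y" for y
    using exp_minus_gt_taylor3[of "r * y"] that assms(5) by (simp add: T_def power_mult_distrib)
  then have le: "T y \<le> exp (-(r * max y 0))" for y
    by (cases "0 < y") (auto simp: T_def less_imp_le)
  have "1 - r * (\<integral>y. max y 0 \<partial>M) + r^2 / 2 * (\<integral>y. (max y 0)^2 \<partial>M)
      - r^3 / 6 * (\<integral>y. (max y 0)^3 \<partial>M) = (\<integral>y. T y \<partial>M)"
    using assms prob_space by (simp add: T_def)
  also have "\<dots> < laplace M r"
    unfolding laplace_def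
    by (rule integral_less_AE[where A = "{0<..}"])
       (use assms lt le integrable_exp_neg_pos_part[of r] in
         \<open>auto simp: T_def intro!: AE_I2 dest: less_imp_neq\<close>)
  finally show ?thesis .
qed

end

text \<open>The smaller root of \<open>c r\<^sup>2 - 3 b r + 6 a = 0\<close>. With \<open>a = E Y - 1\<close>, \<open>b = E Y\<^sup>2\<close>,
  \<open>c = E Y\<^sup>3\<close> this is where the third-order Taylor bound
  \<open>r E Y - r\<^sup>2 E Y\<^sup>2 / 2 + r\<^sup>3 E Y\<^sup>3 / 6\<close> of \<open>1 - E exp (-r Y)\<close> first returns to \<open>r\<close>.\<close>
definition lesser_root :: "real \<Rightarrow> real \<Rightarrow> real \<Rightarrow> real" where
  "lesser_root a b c = (3 * b - sqrt (9 * b^2 - 24 * a * c)) / (2 * c)"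

context
  fixes a b c :: real
  assumes pos: "0 < a" "0 < b" "0 < c" and discr: "8 * a * c \<le> 3 * b^2"
begin

lemma lesser_root_pos: "0 < lesser_root a b c"
  and lesser_root_root: "c * (lesser_root a b c)^2 - 3 * b * lesser_root a b c + 6 * a = 0"
proof -
  define s where "s = sqrt (9 * b^2 - 24 * a * c)"
  have d: "0 \<le> 9 * b^2 - 24 * a * c" using discr by (simp add: algebra_simps)
  have s2: "s^2 = 9 * b^2 - 24 * a * c" unfolding s_def by (rule real_sqrt_pow2[OF d])
  have "0 \<le> s" unfolding s_def using d by simp
  moreover have "s^2 < (3 * b)^2" using s2 pos by (simp add: power_mult_distrib)
  ultimately have "s < 3 * b" using pos by (smt (verit) power_mono)
  then show "0 < lesser_root a b c" using pos by (simp add: lesser_root_def s_def[symmetric])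
  have R: "2 * c * lesser_root a b c = 3 * b - s" using pos by (simp add: lesser_root_def s_def)
  have "4 * c * (c * (lesser_root a b c)^2 - 3 * b * lesser_root a b c + 6 * a)
      = (2 * c * lesser_root a b c)^2 - 6 * b * (2 * c * lesser_root a b c) + 24 * a * c"
    by (simp add: power2_eq_square algebra_simps)
  also have "\<dots> = 0" unfolding R using s2 by (simp add: power2_eq_square algebra_simps)
  finally show "c * (lesser_root a b c)^2 - 3 * b * lesser_root a b c + 6 * a = 0"
    using pos by simp
qed

lemma lesser_root_eq: "lesser_root a b c = 4 * a / (b + sqrt (b^2 - 8 / 3 * a * c))"
proof -
  define t where "t = sqrt (b^2 - 8 / 3 * a * c)"
  have d: "0 \<le> b^2 - 8 / 3 * a * c" using discr by (simp add: algebra_simps)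
  have t2: "t^2 = b^2 - 8 / 3 * a * c" unfolding t_def by (rule real_sqrt_pow2[OF d])
  have t0: "0 \<le> t" unfolding t_def using d by simp
  have "sqrt (9 * b^2 - 24 * a * c) = sqrt (3^2 * (b^2 - 8 / 3 * a * c))" by simp
  also have "\<dots> = 3 * t" unfolding real_sqrt_mult t_def by simp
  finally have "lesser_root a b c = (3 * b - 3 * t) / (2 * c)" by (simp add: lesser_root_def)
  also have "\<dots> = 4 * a / (b + t)"
  proof -
    have "3 * (b - t) * (b + t) = 8 * a * c"
      using t2 by (simp add: power2_eq_square algebra_simps)
    then show ?thesis using pos t0 by (simp add: field_simps)
  qed
  finally show ?thesis unfolding t_def .
qed

lemma rationalized_lesser_root_le:
  "4 * a / (b + sqrt (b^2 - 8 / 3 * a * c)) \<le> 2 * a / b * (1 + 8 * a * c / (3 * b^2))"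
proof -
  define t where "t = sqrt (b^2 - 8 / 3 * a * c)"
  have d: "0 \<le> b^2 - 8 / 3 * a * c" using discr by (simp add: algebra_simps)
  have t2: "t^2 = b^2 - 8 / 3 * a * c" unfolding t_def by (rule real_sqrt_pow2[OF d])
  have t0: "0 \<le> t" unfolding t_def using d by simp
  have "t^2 \<le> b^2" using t2 pos by simp
  then have "t \<le> b" by (rule power2_le_imp_le) (use pos in simp)
  then have "0 \<le> t * (b - t) * (2 * b + t)" using t0 pos by simp
  also have "t * (b - t) * (2 * b + t) = (2 * b^2 - t^2) * (b + t) - 2 * b^3"
    by (simp add: algebra_simps power2_eq_square power3_eq_cube)
  finally have "2 * a * (2 * b^3) \<le> 2 * a * ((2 * b^2 - t^2) * (b + t))"
    using pos(1) by (intro mult_left_mono) auto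
  then have "4 * a / (b + t) \<le> 2 * a * (2 * b^2 - t^2) / b^3"
    using pos t0 by (simp add: divide_simps algebra_simps)
  also have "\<dots> = 2 * a / b * ((2 * b^2 - t^2) / b^2)"
    by (simp add: power2_eq_square power3_eq_cube)
  also have "(2 * b^2 - t^2) / b^2 = 1 + 3 * (b^2 - t^2) / (3 * b^2)"
    using pos by (simp add: field_simps)
  also have "3 * (b^2 - t^2) = 8 * a * c"
    using t2 by simp
  finally show ?thesis unfolding t_def .
qed

end

locale nonneg_distribution = real_distribution +
  assumes AE_nonneg: "AE y in M. 0 \<le> y"

lemma nonneg_law_iff_nonneg_distribution: "nonneg_law \<mu> \<longleftrightarrow> nonneg_distribution \<mu>"
  by (simp add: nonneg_law_def nonneg_distribution_def nonneg_distribution_axioms_def)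

context nonneg_distribution
begin

lemma moment_eq_pos_part: "moment M k = (\<integral>\<^sup>+y. ennreal ((max y 0)^k) \<partial>M)"
  unfolding moment_def by (rule nn_integral_cong_AE) (auto intro: eventually_mono[OF AE_nonneg])

lemma moment_Suc_pos_iff: "0 < moment M (Suc k) \<longleftrightarrow> emeasure M {0<..} \<noteq> 0"
proof -
  have "moment M (Suc k) = 0 \<longleftrightarrow> (AE y in M. ennreal ((max y 0)^Suc k) = 0)"
    unfolding moment_eq_pos_part by (rule nn_integral_0_iff_AE) simp
  also have "\<dots> \<longleftrightarrow> (AE y in M. y \<notin> {0<..})"
    by (intro AE_cong) (auto simp: max_def)
  also have "\<dots> \<longleftrightarrow> emeasure M {0<..} = 0"
    by (rule AE_iff_measurable) auto
  finally show ?thesis by (simp add: zero_less_iff_neq_zero)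
qed

lemma moment_finite_imp_integrable:
  "moment M k < \<infinity> \<Longrightarrow> integrable M (\<lambda>y. (max y 0)^k)"
  by (rule integrableI_nonneg) (auto simp: moment_eq_pos_part)

lemma enn2real_moment:
  assumes "moment M k < \<infinity>"
  shows "enn2real (moment M k) = (\<integral>y. (max y 0)^k \<partial>M)"
  unfolding moment_eq_pos_part
  by (subst nn_integral_eq_integral[OF moment_finite_imp_integrable[OF assms]]) auto

lemma moment_finite_Suc_imp:
  assumes "moment M (Suc k) < \<infinity>"
  shows "moment M k < \<infinity>"
proof -
  have "ennreal ((max y 0)^k) \<le> 1 + ennreal ((max y 0)^Suc k)" for y :: real
  proof -
    have "(max y 0)^k \<le> 1 + (max y 0)^Suc k"
    proof (cases "max y 0 \<le> 1")
      case True
      then show ?thesis by (smt (verit) power_le_one zero_le_power max.cobounded2)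
    next
      case False
      then have "(max y 0)^k \<le> (max y 0)^Suc k" by (intro power_increasing) auto
      then show ?thesis by simp
    qed
    then show ?thesis
      by (metis ennreal_1 ennreal_leI ennreal_plus max.cobounded2 zero_le_one zero_le_power)
  qed
  then have "moment M k \<le> (\<integral>\<^sup>+y. 1 + ennreal ((max y 0)^Suc k) \<partial>M)"
    unfolding moment_eq_pos_part by (intro nn_integral_mono)
  also have "\<dots> = 1 + moment M (Suc k)"
    using emeasure_space_1 by (simp add: nn_integral_add moment_eq_pos_part)
  finally show ?thesis
    using assms by (simp add: order_le_less_trans ennreal_add_less_top)
qed

lemma solves_eq_iff_laplace: "solves_eq M r \<longleftrightarrow> r = 1 - laplace M r"
proof -
  have "(\<integral>y. exp (- (r * y)) \<partial>M) = laplace M r"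
    unfolding laplace_def by (rule integral_cong_AE) (auto intro: eventually_mono[OF AE_nonneg])
  then show ?thesis by (simp add: solves_eq_def)
qed

lemma solves_eq_iff_mean_exp_defect:
  "0 < r \<Longrightarrow> solves_eq M r \<longleftrightarrow> mean_exp_defect M r = 1"
  by (auto simp: solves_eq_iff_laplace mean_exp_defect_eq divide_simps)

lemma mean_exp_defect_lt_one:
  assumes "moment M 1 \<le> 1" "0 < r"
  shows "mean_exp_defect M r < 1"
proof (cases "emeasure M {0<..} = 0")
  case True
  then show ?thesis by (simp add: mean_exp_defect_null)
next
  case False
  have "ennreal (mean_exp_defect M (r / 2)) \<le> moment M 1"
    using mean_exp_defect_le_pos_mean[of "r / 2"] assms by (simp add: moment_def)
  then have "ennreal (mean_exp_defect M (r / 2)) \<le> 1"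
    by (rule order_trans[OF _ assms(1)])
  then have "mean_exp_defect M (r / 2) \<le> 1"
    by (simp add: ennreal_le_1)
  moreover have "mean_exp_defect M r < mean_exp_defect M (r / 2)"
    using mean_exp_defect_strict_antimono[OF False] assms by simp
  ultimately show ?thesis by simp
qed

lemma ex1_solves_eq:
  assumes "1 < moment M 1"
  shows "\<exists>!\<rho>. 0 < \<rho> \<and> solves_eq M \<rho>"
proof -
  have mass: "emeasure M {0<..} \<noteq> 0"
    using assms moment_Suc_pos_iff[of 0] by auto
  obtain r where r: "0 < r" "1 < mean_exp_defect M r"
    using mean_exp_defect_exceeds[of 1] assms by (auto simp: moment_def)
  have "mean_exp_defect M (r + 2) \<le> 1 / (r + 2)"
    using r by (intro mean_exp_defect_le_inverse) simp
  also have "\<dots> \<le> 1"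
    using r by simp
  finally have "mean_exp_defect M (r + 2) \<le> 1" .
  moreover have "continuous_on {r..r + 2} (mean_exp_defect M)"
    by (rule continuous_on_subset[OF continuous_on_mean_exp_defect]) (use r in auto)
  ultimately obtain \<rho> where \<rho>: "r \<le> \<rho>" "mean_exp_defect M \<rho> = 1"
    using IVT2'[of "mean_exp_defect M" "r + 2" 1 r] r by auto
  show ?thesis
  proof (rule ex1I[of _ \<rho>])
    show "0 < \<rho> \<and> solves_eq M \<rho>"
      using \<rho> r solves_eq_iff_mean_exp_defect by auto
    show "\<sigma> = \<rho>" if "0 < \<sigma> \<and> solves_eq M \<sigma>" for \<sigma>
      using that \<rho> r mean_exp_defect_strict_antimono[OF mass, of \<sigma> \<rho>]
        mean_exp_defect_strict_antimono[OF mass, of \<rho> \<sigma>]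
      by (auto simp: solves_eq_iff_mean_exp_defect) (metis linorder_neqE_linordered_idom)
  qed
qed

lemma moment_Suc_finite_pos:
  assumes "1 < moment M 1" "moment M (Suc k) < \<infinity>"
  shows "0 < enn2real (moment M (Suc k))"
  using assms order.strict_trans[OF zero_less_one assms(1)]
    moment_Suc_pos_iff[of 0] moment_Suc_pos_iff[of k]
  by (simp add: enn2real_positive_iff)

lemma one_less_enn2real_moment:
  assumes "1 < moment M 1" "moment M 1 < \<infinity>"
  shows "1 < enn2real (moment M 1)"
proof -
  have "1 < ennreal (enn2real (moment M 1))"
    using assms by simp
  then show ?thesis
    by (simp add: one_less_ennreal)
qed

lemma solution_gt_second_order_bound:
  assumes "0 < \<rho>" "solves_eq M \<rho>" "1 < moment M 1" "moment M 2 < \<infinity>"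
  shows "2 * (enn2real (moment M 1) - 1) / enn2real (moment M 2) < \<rho>"
proof -
  define m1 m2 where "m1 = enn2real (moment M 1)" and "m2 = enn2real (moment M 2)"
  have f1: "moment M 1 < \<infinity>"
    using moment_finite_Suc_imp[of 1] assms(4) by (simp add: numeral_2_eq_2)
  have mass: "emeasure M {0<..} \<noteq> 0"
    using assms(3) moment_Suc_pos_iff[of 0] by auto
  have m2: "0 < m2"
    using moment_Suc_finite_pos[of 1] assms by (simp add: m2_def numeral_2_eq_2)
  have "\<rho> * m1 - \<rho>^2 * m2 / 2 < 1 - laplace M \<rho>"
    using laplace_lt_taylor2[OF _ _ mass assms(1)] f1 assms(4)
      moment_finite_imp_integrable[of 1] moment_finite_imp_integrable[of 2]
    by (simp add: m1_def m2_def enn2real_moment)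
  also have "\<dots> = \<rho>"
    using assms(2) solves_eq_iff_laplace by simp
  finally have "\<rho> * (m1 - 1) < \<rho> * (\<rho> * m2 / 2)"
    by (simp add: power2_eq_square algebra_simps)
  then have "m1 - 1 < \<rho> * m2 / 2"
    using assms(1) by simp
  then show ?thesis
    using m2 by (simp add: m1_def m2_def divide_less_eq algebra_simps)
qed

lemma solution_lt_lesser_root:
  assumes "0 < \<rho>" "solves_eq M \<rho>" "1 < moment M 1" "moment M 3 < \<infinity>"
    and "8 * (enn2real (moment M 1) - 1) * enn2real (moment M 3) \<le> 3 * (enn2real (moment M 2))^2"
  shows "\<rho> < lesser_root (enn2real (moment M 1) - 1) (enn2real (moment M 2)) (enn2real (moment M 3))"
proof -
  define m1 m2 m3 where "m1 = enn2real (moment M 1)" and "m2 = enn2real (moment M 2)"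
    and "m3 = enn2real (moment M 3)"
  have f2: "moment M 2 < \<infinity>"
    using moment_finite_Suc_imp[of 2] assms(4) by (simp add: numeral_3_eq_3)
  have f1: "moment M 1 < \<infinity>"
    using moment_finite_Suc_imp[of 1] f2 by (simp add: numeral_2_eq_2)
  have mass: "emeasure M {0<..} \<noteq> 0"
    using assms(3) moment_Suc_pos_iff[of 0] by auto
  have "1 < m1"
    unfolding m1_def by (rule one_less_enn2real_moment[OF assms(3) f1])
  moreover have "0 < m2" "0 < m3"
    using moment_Suc_finite_pos[of 1] moment_Suc_finite_pos[of 2] assms(3) f2 assms(4)
    by (simp_all add: m2_def m3_def numeral_2_eq_2 numeral_3_eq_3)
  ultimately have pos: "0 < m1 - 1" "0 < m2" "0 < m3" by simp_all
  define r where "r = lesser_root (m1 - 1) m2 m3"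
  have r: "0 < r" "m3 * r^2 - 3 * m2 * r + 6 * (m1 - 1) = 0"
    using lesser_root_pos[OF pos] lesser_root_root[OF pos] assms(5)
    by (simp_all add: r_def m1_def m2_def m3_def)
  have "1 - laplace M r < r * m1 - r^2 / 2 * m2 + r^3 / 6 * m3"
    using laplace_gt_taylor3[OF _ _ _ mass r(1)] f1 f2 assms(4)
      moment_finite_imp_integrable[of 1] moment_finite_imp_integrable[of 2]
      moment_finite_imp_integrable[of 3]
    by (simp add: m1_def m2_def m3_def enn2real_moment)
  also have "\<dots> = r + r * (m3 * r^2 - 3 * m2 * r + 6 * (m1 - 1)) / 6"
    by (simp add: power2_eq_square power3_eq_cube field_simps)
  finally have "mean_exp_defect M r < 1"
    using r by (simp add: mean_exp_defect_eq divide_less_eq)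
  then have "\<rho> < r"
    using mean_exp_defect_antimono[OF r(1), of \<rho>] assms(1,2) solves_eq_iff_mean_exp_defect
    by force
  then show ?thesis
    by (simp add: r_def m1_def m2_def m3_def)
qed

lemma solution_moment_bounds:
  assumes "0 < \<rho>" "solves_eq M \<rho>" "1 < moment M 1"
  shows "let m1 = enn2real (moment M 1); m2 = enn2real (moment M 2);
               m3 = enn2real (moment M 3) in
            (moment M 2 < \<infinity> \<longrightarrow> \<rho> > 2 * (m1 - 1) / m2)
          \<and> (moment M 3 < \<infinity> \<and> 8 * (m1 - 1) * m3 \<le> 3 * m2\<^sup>2 \<longrightarrow>
               \<rho> < (3 * m2 - sqrt (9 * m2\<^sup>2 - 24 * (m1 - 1) * m3)) / (2 * m3)
             \<and> (3 * m2 - sqrt (9 * m2\<^sup>2 - 24 * (m1 - 1) * m3)) / (2 * m3)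
                 = 4 * (m1 - 1) / (m2 + sqrt (m2\<^sup>2 - 8 / 3 * (m1 - 1) * m3))
             \<and> 4 * (m1 - 1) / (m2 + sqrt (m2\<^sup>2 - 8 / 3 * (m1 - 1) * m3))
                 \<le> 2 * (m1 - 1) / m2 * (1 + 8 * (m1 - 1) * m3 / (3 * m2\<^sup>2)))"
proof -
  define m1 m2 m3 where "m1 = enn2real (moment M 1)" and "m2 = enn2real (moment M 2)"
    and "m3 = enn2real (moment M 3)"
  have "0 < m1 - 1 \<and> 0 < m2 \<and> 0 < m3" if "moment M 3 < \<infinity>"
  proof -
    have "moment M 2 < \<infinity>" "moment M 1 < \<infinity>"
      using that moment_finite_Suc_imp[of 2] moment_finite_Suc_imp[of 1]
      by (simp_all add: numeral_2_eq_2 numeral_3_eq_3)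
    then show ?thesis
      using that one_less_enn2real_moment[OF assms(3)]
        moment_Suc_finite_pos[OF assms(3), of 1] moment_Suc_finite_pos[OF assms(3), of 2]
      unfolding m1_def m2_def m3_def by (simp add: numeral_2_eq_2 numeral_3_eq_3)
  qed
  then show ?thesis
    unfolding Let_def lesser_root_def[symmetric] m1_def[symmetric] m2_def[symmetric]
      m3_def[symmetric]
    using solution_gt_second_order_bound[OF assms, folded m1_def m2_def]
      solution_lt_lesser_root[OF assms, folded m1_def m2_def m3_def]
      lesser_root_eq[of "m1 - 1" m2 m3] rationalized_lesser_root_le[of "m1 - 1" m2 m3]
    by blast
qed

end

context
  fixes \<nu> :: "nat \<Rightarrow> real measure" and \<rho>s :: "nat \<Rightarrow> real" and \<mu> :: "real measure"
  assumes laws: "\<And>n. nonneg_distribution (\<nu> n)" and limit_law: "nonneg_distribution \<mu>"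
    and solutions: "\<And>n. 0 < \<rho>s n \<and> solves_eq (\<nu> n) (\<rho>s n)"
    and weak_conv: "weak_conv_m \<nu> \<mu>"
begin

lemma mean_exp_defect_at_solutions: "mean_exp_defect (\<nu> n) (\<rho>s n) = 1"
  using solutions nonneg_distribution.solves_eq_iff_mean_exp_defect[OF laws] by blast

lemma mean_exp_defect_tendsto:
  "0 < r \<Longrightarrow> (\<lambda>n. mean_exp_defect (\<nu> n) r) \<longlonglongrightarrow> mean_exp_defect \<mu> r"
  using laws limit_law weak_conv
  by (intro real_distribution.mean_exp_defect_weak_conv) (auto simp: nonneg_distribution_def)

lemma eventually_gt_solutions:
  assumes "0 < c" "1 < mean_exp_defect \<mu> c"
  shows "\<forall>\<^sub>F n in sequentially. c < \<rho>s n"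
proof -
  have "\<forall>\<^sub>F n in sequentially. 1 < mean_exp_defect (\<nu> n) c"
    using mean_exp_defect_tendsto[OF assms(1)] assms(2) by (rule order_tendstoD)
  then show ?thesis
  proof eventually_elim
    case (elim n)
    show "c < \<rho>s n"
    proof (rule ccontr)
      assume "\<not> c < \<rho>s n"
      then have "mean_exp_defect (\<nu> n) c \<le> mean_exp_defect (\<nu> n) (\<rho>s n)"
        using solutions[of n] laws[of n]
        by (intro real_distribution.mean_exp_defect_antimono) (auto simp: nonneg_distribution_def)
      with elim show False
        by (simp add: mean_exp_defect_at_solutions)
    qed
  qed
qed

lemma eventually_lt_solutions:
  assumes "0 < c" "mean_exp_defect \<mu> c < 1"
  shows "\<forall>\<^sub>F n in sequentially. \<rho>s n < c"
proof -
  have "\<forall>\<^sub>F n in sequentially. mean_exp_defect (\<nu> n) c < 1"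
    using mean_exp_defect_tendsto[OF assms(1)] assms(2) by (rule order_tendstoD)
  then show ?thesis
  proof eventually_elim
    case (elim n)
    show "\<rho>s n < c"
    proof (rule ccontr)
      assume "\<not> \<rho>s n < c"
      then have "mean_exp_defect (\<nu> n) (\<rho>s n) \<le> mean_exp_defect (\<nu> n) c"
        using assms(1) laws[of n]
        by (intro real_distribution.mean_exp_defect_antimono) (auto simp: nonneg_distribution_def)
      with elim show False
        by (simp add: mean_exp_defect_at_solutions)
    qed
  qed
qed

lemma solutions_tendsto_solution:
  assumes "1 < moment \<mu> 1"
  shows "\<exists>\<rho>. 0 < \<rho> \<and> solves_eq \<mu> \<rho> \<and> \<rho>s \<longlonglongrightarrow> \<rho>"
proof -
  interpret nonneg_distribution \<mu> by (rule limit_law)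
  obtain \<rho> where \<rho>: "0 < \<rho>" "solves_eq \<mu> \<rho>"
    using ex1_solves_eq[OF assms] by auto
  then have one: "mean_exp_defect \<mu> \<rho> = 1"
    by (simp add: solves_eq_iff_mean_exp_defect)
  have mass: "emeasure \<mu> {0<..} \<noteq> 0"
    using assms moment_Suc_pos_iff[of 0] by auto
  have "\<rho>s \<longlonglongrightarrow> \<rho>"
  proof (rule order_tendstoI)
    fix a assume "a < \<rho>"
    then have c: "0 < max a (\<rho> / 2)" "max a (\<rho> / 2) < \<rho>"
      using \<rho>(1) by auto
    have "1 < mean_exp_defect \<mu> (max a (\<rho> / 2))"
      using mean_exp_defect_strict_antimono[OF mass c] one by simp
    from eventually_gt_solutions[OF c(1) this]
    show "\<forall>\<^sub>F n in sequentially. a < \<rho>s n"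
      by eventually_elim simp
  next
    fix a assume "\<rho> < a"
    then have "mean_exp_defect \<mu> a < 1"
      using mean_exp_defect_strict_antimono[OF mass \<rho>(1)] one by simp
    then show "\<forall>\<^sub>F n in sequentially. \<rho>s n < a"
      using eventually_lt_solutions \<open>\<rho> < a\<close> \<rho>(1) by simp
  qed
  with \<rho> show ?thesis by blast
qed

lemma solutions_tendsto_zero:
  assumes "moment \<mu> 1 \<le> 1"
  shows "\<rho>s \<longlonglongrightarrow> 0"
proof (rule order_tendstoI)
  fix a :: real assume "a < 0"
  then show "\<forall>\<^sub>F n in sequentially. a < \<rho>s n"
    using solutions by (auto intro: always_eventually less_trans)
next
  fix a :: real assume "0 < a"
  then show "\<forall>\<^sub>F n in sequentially. \<rho>s n < a"
    using eventually_lt_solutions nonneg_distribution.mean_exp_defect_lt_one[OF limit_law assms]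
    by simp
qed

end

theorem lemma4p1:
  fixes \<mu> :: "real measure"
  assumes law: "nonneg_law \<mu>"
    and mean: "1 < moment \<mu> 1"
  shows "(\<exists>!\<rho>. 0 < \<rho> \<and> solves_eq \<mu> \<rho>)
    \<and> (\<forall>\<rho>. 0 < \<rho> \<and> solves_eq \<mu> \<rho> \<longrightarrow>
          (let m1 = enn2real (moment \<mu> 1); m2 = enn2real (moment \<mu> 2);
               m3 = enn2real (moment \<mu> 3) in
            (moment \<mu> 2 < \<infinity> \<longrightarrow> \<rho> > 2 * (m1 - 1) / m2)
          \<and> (moment \<mu> 3 < \<infinity> \<and> 8 * (m1 - 1) * m3 \<le> 3 * m2\<^sup>2 \<longrightarrow>
               \<rho> < (3 * m2 - sqrt (9 * m2\<^sup>2 - 24 * (m1 - 1) * m3)) / (2 * m3)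
             \<and> (3 * m2 - sqrt (9 * m2\<^sup>2 - 24 * (m1 - 1) * m3)) / (2 * m3)
                 = 4 * (m1 - 1) / (m2 + sqrt (m2\<^sup>2 - 8 / 3 * (m1 - 1) * m3))
             \<and> 4 * (m1 - 1) / (m2 + sqrt (m2\<^sup>2 - 8 / 3 * (m1 - 1) * m3))
                 \<le> 2 * (m1 - 1) / m2 * (1 + 8 * (m1 - 1) * m3 / (3 * m2\<^sup>2)))))
    \<and> (\<forall>(\<nu> :: nat \<Rightarrow> real measure) (\<rho>s :: nat \<Rightarrow> real) (\<mu>' :: real measure).
          (\<forall>n. nonneg_law (\<nu> n) \<and> 1 < moment (\<nu> n) 1 \<and> 0 < \<rho>s n \<and> solves_eq (\<nu> n) (\<rho>s n))
          \<and> nonneg_law \<mu>' \<and> weak_conv_m \<nu> \<mu>' \<longrightarrow>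
            (1 < moment \<mu>' 1 \<longrightarrow> (\<exists>\<rho>. 0 < \<rho> \<and> solves_eq \<mu>' \<rho> \<and> \<rho>s \<longlonglongrightarrow> \<rho>))
          \<and> (moment \<mu>' 1 \<le> 1 \<longrightarrow> \<rho>s \<longlonglongrightarrow> 0))"
proof -
  interpret nonneg_distribution \<mu>
    using law by (simp add: nonneg_law_iff_nonneg_distribution)
  have "(1 < moment \<mu>' 1 \<longrightarrow> (\<exists>\<rho>. 0 < \<rho> \<and> solves_eq \<mu>' \<rho> \<and> \<rho>s \<longlonglongrightarrow> \<rho>))
      \<and> (moment \<mu>' 1 \<le> 1 \<longrightarrow> \<rho>s \<longlonglongrightarrow> 0)"
    if "\<forall>n. nonneg_distribution (\<nu> n) \<and> 1 < moment (\<nu> n) 1 \<and> 0 < \<rho>s n \<and> solves_eq (\<nu> n) (\<rho>s n)"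
      and "nonneg_distribution \<mu>'" "weak_conv_m \<nu> \<mu>'"
    for \<nu> \<rho>s \<mu>'
    using that solutions_tendsto_solution[of \<nu> \<mu>' \<rho>s] solutions_tendsto_zero[of \<nu> \<mu>' \<rho>s]
    by simp
  then show ?thesis
    unfolding nonneg_law_iff_nonneg_distribution
    using ex1_solves_eq[OF mean] solution_moment_bounds[OF _ _ mean] by blast
qed

end
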